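(* Let $\widetilde{\mathbf S}=\prod_{i=1}^m\widetilde{\mathbf S}_i$ be a semisimple algebra over an algebraically closed field $\mathbbm k$ with simple components $\widetilde{\mathbf S}_i\cong\mathrm{Mat}(d_i,\mathbbm k)$, and let $\mathbf S=\prod_{k=1}^r\mathbf S_k$ be a subalgebra with $\mathbf S_k\cong\mathbbm k$ and $\operatorname{length}_{\mathbf S}(\widetilde{\mathbf S}\otimes_{\mathbf S}\mathbf S_k)\le2$ for all $1\le k\le r$. Then for each $1\le k\le r$ one of the following holds: (1) $\mathbf S_k=\widetilde{\mathbf S}_i$ for some $i$; (2) $\mathbf S_k\subset\widetilde{\mathbf S}_i\times\widetilde{\mathbf S}_j$ for some $i\ne j$ with $\widetilde{\mathbf S}_i\cong\widetilde{\mathbf S}_j\cong\mathbbm k$, and $\mathbf S_k\cong\mathbbm k$ embeds into $\widetilde{\mathbf S}_i\times\widetilde{\mathbf S}_j\cong\mathbbm k\times\mathbbm k$ diagonally; (3) there is an index $q\ne k$ such that $\mathbf S_k\times\mathbf S_q\subset\widetilde{\mathbf S}_i$ for some $i$ with $\widetilde{\mathbf S}_i\cong\mathrm{Mat}(2,\mathbbm k)$, and this isomorphism can be chosen so that $\mathbf S_k\times\mathbf S_q$ embeds into $\widetilde{\mathbf S}_i$ as the subalgebra of diagonal matrices.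
   Context: Algebras are finite-dimensional over $\mathbbm k$. Here $\mathbf S_k$ is regarded as a (simple) left $\mathbf S$-module, and $\widetilde{\mathbf S}\otimes_{\mathbf S}\mathbf S_k$ as a left $\mathbf S$-module by restriction. *)

theory Defs
  imports "HOL-Computational_Algebra.Polynomial" "Jordan_Normal_Form.Matrix"
begin

text \<open>Concrete model of the semisimple algebra
  St = Mat(d 0) x ... x Mat(d (m-1)) over k: elements are functions
  f :: nat => 'a mat with f i a (d i) x (d i) matrix for i < m and
  the canonical 0 x 0 matrix for i >= m.  Components are indexed 0..m-1.\<close>

definition zcomp :: "(nat \<Rightarrow> nat) \<Rightarrow> nat \<Rightarrow> nat \<Rightarrow> 'a::semiring_1 mat" where
  "zcomp d m l = (if l < m then 0\<^sub>m (d l) (d l) else 0\<^sub>m 0 0)"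

definition ocomp :: "(nat \<Rightarrow> nat) \<Rightarrow> nat \<Rightarrow> nat \<Rightarrow> 'a::semiring_1 mat" where
  "ocomp d m l = (if l < m then 1\<^sub>m (d l) else 0\<^sub>m 0 0)"

definition Stilde :: "(nat \<Rightarrow> nat) \<Rightarrow> nat \<Rightarrow> (nat \<Rightarrow> 'a::semiring_1 mat) set" where
  "Stilde d m = {f. (\<forall>i<m. f i \<in> carrier_mat (d i) (d i)) \<and> (\<forall>i\<ge>m. f i = 0\<^sub>m 0 0)}"

definition tzero :: "(nat \<Rightarrow> nat) \<Rightarrow> nat \<Rightarrow> nat \<Rightarrow> 'a::semiring_1 mat" where
  "tzero d m = zcomp d m"

definition tone :: "(nat \<Rightarrow> nat) \<Rightarrow> nat \<Rightarrow> nat \<Rightarrow> 'a::semiring_1 mat" where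
  "tone d m = ocomp d m"

definition tadd :: "(nat \<Rightarrow> 'a::semiring_1 mat) \<Rightarrow> (nat \<Rightarrow> 'a mat) \<Rightarrow> nat \<Rightarrow> 'a mat" where
  "tadd f g = (\<lambda>l. f l + g l)"

definition tmul :: "(nat \<Rightarrow> 'a::semiring_1 mat) \<Rightarrow> (nat \<Rightarrow> 'a mat) \<Rightarrow> nat \<Rightarrow> 'a mat" where
  "tmul f g = (\<lambda>l. f l * g l)"

definition tsmult :: "'a::semiring_1 \<Rightarrow> (nat \<Rightarrow> 'a mat) \<Rightarrow> nat \<Rightarrow> 'a mat" where
  "tsmult c f = (\<lambda>l. c \<cdot>\<^sub>m f l)"

definition Scomp :: "(nat \<Rightarrow> nat) \<Rightarrow> nat \<Rightarrow> nat \<Rightarrow> (nat \<Rightarrow> 'a::semiring_1 mat) set" where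
  "Scomp d m i = {f \<in> Stilde d m. \<forall>l. l \<noteq> i \<longrightarrow> f l = zcomp d m l}"

definition kpow :: "nat \<Rightarrow> (nat \<Rightarrow> 'a::field) set" where
  "kpow r = {v. \<forall>l\<ge>r. v l = 0}"

definition kunit :: "nat \<Rightarrow> nat \<Rightarrow> 'a::field" where
  "kunit r = (\<lambda>l. if l < r then 1 else 0)"

text \<open>phi is an injective unital k-algebra homomorphism k^r -> St; its image is
  the subalgebra S, and S_k is the image of the k-th factor of k^r.\<close>
definition alg_embedding ::
  "(nat \<Rightarrow> nat) \<Rightarrow> nat \<Rightarrow> nat \<Rightarrow> ((nat \<Rightarrow> 'a::field) \<Rightarrow> nat \<Rightarrow> 'a mat) \<Rightarrow> bool" where
  "alg_embedding d m r \<phi> \<longleftrightarrow>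
     inj_on \<phi> (kpow r) \<and> \<phi> ` kpow r \<subseteq> Stilde d m \<and>
     (\<forall>v\<in>kpow r. \<forall>w\<in>kpow r. \<phi> (\<lambda>l. v l + w l) = tadd (\<phi> v) (\<phi> w)) \<and>
     (\<forall>v\<in>kpow r. \<forall>w\<in>kpow r. \<phi> (\<lambda>l. v l * w l) = tmul (\<phi> v) (\<phi> w)) \<and>
     (\<forall>c. \<forall>v\<in>kpow r. \<phi> (\<lambda>l. c * v l) = tsmult c (\<phi> v)) \<and>
     \<phi> (kunit r) = tone d m"

definition Ssub :: "nat \<Rightarrow> ((nat \<Rightarrow> 'a::field) \<Rightarrow> nat \<Rightarrow> 'a mat) \<Rightarrow> (nat \<Rightarrow> 'a mat) set" where
  "Ssub r \<phi> = \<phi> ` kpow r"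

definition Sfac :: "((nat \<Rightarrow> 'a::field) \<Rightarrow> nat \<Rightarrow> 'a mat) \<Rightarrow> nat \<Rightarrow> (nat \<Rightarrow> 'a mat) set" where
  "Sfac \<phi> k = \<phi> ` {v. \<forall>l. l \<noteq> k \<longrightarrow> v l = 0}"

definition sidem :: "((nat \<Rightarrow> 'a::field) \<Rightarrow> nat \<Rightarrow> 'a mat) \<Rightarrow> nat \<Rightarrow> nat \<Rightarrow> 'a mat" where
  "sidem \<phi> k = \<phi> (\<lambda>l. if l = k then 1 else 0)"

text \<open>The left S-module St (x)_S S_k, realised as St e_k with S acting by left
  multiplication (canonical isomorphism a (x) s |-> a s e_k).\<close>
definition tens_mod :: "(nat \<Rightarrow> nat) \<Rightarrow> nat \<Rightarrow> ((nat \<Rightarrow> 'a::field) \<Rightarrow> nat \<Rightarrow> 'a mat) \<Rightarrow> nat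
    \<Rightarrow> (nat \<Rightarrow> 'a mat) set" where
  "tens_mod d m \<phi> k = {tmul a (sidem \<phi> k) | a. a \<in> Stilde d m}"

definition is_submodule :: "(nat \<Rightarrow> nat) \<Rightarrow> nat \<Rightarrow> (nat \<Rightarrow> 'a::field mat) set
    \<Rightarrow> (nat \<Rightarrow> 'a mat) set \<Rightarrow> (nat \<Rightarrow> 'a mat) set \<Rightarrow> bool" where
  "is_submodule d m S M N \<longleftrightarrow> N \<subseteq> M \<and> tzero d m \<in> N \<and>
     (\<forall>x\<in>N. \<forall>y\<in>N. tadd x y \<in> N) \<and> (\<forall>s\<in>S. \<forall>x\<in>N. tmul s x \<in> N)"

definition length_le :: "(nat \<Rightarrow> nat) \<Rightarrow> nat \<Rightarrow> (nat \<Rightarrow> 'a::field mat) set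
    \<Rightarrow> (nat \<Rightarrow> 'a mat) set \<Rightarrow> nat \<Rightarrow> bool" where
  "length_le d m S M n \<longleftrightarrow>
     (\<forall>(c :: nat \<Rightarrow> (nat \<Rightarrow> 'a mat) set) l.
        (\<forall>i\<le>l. is_submodule d m S M (c i)) \<and> (\<forall>i<l. c i \<subset> c (Suc i)) \<longrightarrow> l \<le> n)"

definition mat_alg_iso :: "nat \<Rightarrow> ('a::field mat \<Rightarrow> 'a mat) \<Rightarrow> bool" where
  "mat_alg_iso n \<psi> \<longleftrightarrow> bij_betw \<psi> (carrier_mat n n) (carrier_mat n n) \<and>
     (\<forall>A\<in>carrier_mat n n. \<forall>B\<in>carrier_mat n n. \<psi> (A + B) = \<psi> A + \<psi> B \<and> \<psi> (A * B) = \<psi> A * \<psi> B) \<and>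
     (\<forall>c. \<forall>A\<in>carrier_mat n n. \<psi> (c \<cdot>\<^sub>m A) = c \<cdot>\<^sub>m \<psi> A) \<and>
     \<psi> (1\<^sub>m n) = 1\<^sub>m n"

end

theory Submission
  imports Defs "Jordan_Normal_Form.Determinant"
begin

text \<open>
  Let e_k be the primitive idempotents of S, so that the S-module Stilde \<otimes>_S S_k is
  Stilde e_k with S acting by left multiplication. Every vector y of Stilde e_k with e_q y = y for
  some q spans an S-submodule, so three linearly independent such vectors would give a chain of
  submodules of length 3. Working one simple component Mat(n) at a time, this excludes: e_k being
  non-zero in three components; e_k being non-zero in a component with n \<ge> 2 and in any other
  one; and n \<ge> 3, since then either three of the e_q are non-zero on Mat(n), or e_k + e_q = 1
  there and one of the two summands has rank at least 2. If n = 2, then e_k \<noteq> 1 there, so some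
  other e_q is non-zero on Mat(2); both idempotents live in this component only, and two
  orthogonal non-zero idempotents of Mat(2) are simultaneously conjugate to the two diagonal matrix
  units. If n = 1, then e_k is 1 there. This gives the three cases; the field need not be
  algebraically closed.
\<close>

section \<open>Componentwise algebra in Stilde\<close>

definition comp_dim :: "(nat \<Rightarrow> nat) \<Rightarrow> nat \<Rightarrow> nat \<Rightarrow> nat" where
  "comp_dim d m l = (if l < m then d l else 0)"

lemma carrier_mat_0_0_eq: "A \<in> carrier_mat 0 0 \<Longrightarrow> A = 0\<^sub>m 0 0"
  by (rule eq_matI) auto

lemma zcomp_eq: "zcomp d m l = 0\<^sub>m (comp_dim d m l) (comp_dim d m l)"
  by (simp add: zcomp_def comp_dim_def)

lemma tzero_apply: "tzero d m l = 0\<^sub>m (comp_dim d m l) (comp_dim d m l)"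
  by (simp add: tzero_def zcomp_eq)

lemma tone_apply: "tone d m l = 1\<^sub>m (comp_dim d m l)"
  by (auto simp: tone_def ocomp_def comp_dim_def intro!: eq_matI)

lemma mem_Stilde_iff:
  "f \<in> Stilde d m \<longleftrightarrow> (\<forall>l. f l \<in> carrier_mat (comp_dim d m l) (comp_dim d m l))"
  by (auto simp: Stilde_def comp_dim_def intro: carrier_mat_0_0_eq)

lemma Stilde_carrier [simp]:
  "f \<in> Stilde d m \<Longrightarrow> f l \<in> carrier_mat (comp_dim d m l) (comp_dim d m l)"
  by (simp add: mem_Stilde_iff)

lemma comp_dim_pos_if_nonzero:
  assumes "A \<in> carrier_mat (comp_dim d m l) (comp_dim d m l)"
    and "A \<noteq> 0\<^sub>m (comp_dim d m l) (comp_dim d m l)"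
  shows "l < m" "0 < d l"
proof -
  have "comp_dim d m l \<noteq> 0" using assms carrier_mat_0_0_eq by fastforce
  then show "l < m" "0 < d l" by (simp_all add: comp_dim_def split: if_splits)
qed

lemma tzero_Stilde [simp]: "tzero d m \<in> Stilde d m"
  by (simp add: mem_Stilde_iff tzero_apply)

lemma tadd_Stilde [simp]: "f \<in> Stilde d m \<Longrightarrow> g \<in> Stilde d m \<Longrightarrow> tadd f g \<in> Stilde d m"
  by (simp add: mem_Stilde_iff tadd_def)

lemma tmul_Stilde [simp]:
  assumes "f \<in> Stilde d m" "g \<in> Stilde d m" shows "tmul f g \<in> Stilde d m"
  unfolding mem_Stilde_iff tmul_def
  using mult_carrier_mat[OF assms[THEN Stilde_carrier]] by blast

lemma tsmult_Stilde [simp]: "f \<in> Stilde d m \<Longrightarrow> tsmult c f \<in> Stilde d m"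
  by (simp add: mem_Stilde_iff tsmult_def)

lemma tmul_assoc:
  "f \<in> Stilde d m \<Longrightarrow> g \<in> Stilde d m \<Longrightarrow> h \<in> Stilde d m \<Longrightarrow>
    tmul (tmul f g) h = tmul f (tmul g h)"
  unfolding tmul_def by (rule ext) (rule assoc_mult_mat; rule Stilde_carrier)

lemma tmul_tadd_right:
  "f \<in> Stilde d m \<Longrightarrow> g \<in> Stilde d m \<Longrightarrow> h \<in> Stilde d m \<Longrightarrow>
    tmul h (tadd f g) = tadd (tmul h f) (tmul h g)"
  unfolding tmul_def tadd_def by (rule ext) (rule mult_add_distrib_mat; rule Stilde_carrier)

lemma tmul_tadd_left:
  "f \<in> Stilde d m \<Longrightarrow> g \<in> Stilde d m \<Longrightarrow> h \<in> Stilde d m \<Longrightarrow>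
    tmul (tadd f g) h = tadd (tmul f h) (tmul g h)"
  unfolding tmul_def tadd_def by (rule ext) (rule add_mult_distrib_mat; rule Stilde_carrier)

lemma tmul_tsmult_left:
  fixes f :: "nat \<Rightarrow> 'a::comm_ring_1 mat"
  shows "f \<in> Stilde d m \<Longrightarrow> g \<in> Stilde d m \<Longrightarrow> tmul (tsmult c f) g = tsmult c (tmul f g)"
  unfolding tmul_def tsmult_def by (rule ext) (rule mult_smult_assoc_mat; rule Stilde_carrier)

lemma tmul_tsmult_right:
  fixes f :: "nat \<Rightarrow> 'a::comm_ring_1 mat"
  shows "f \<in> Stilde d m \<Longrightarrow> g \<in> Stilde d m \<Longrightarrow> tmul f (tsmult c g) = tsmult c (tmul f g)"
  unfolding tmul_def tsmult_def by (rule ext) (rule mult_smult_distrib; rule Stilde_carrier)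

lemma tmul_tzero_left: assumes "f \<in> Stilde d m" shows "tmul (tzero d m) f = tzero d m"
proof (rule ext)
  fix l show "tmul (tzero d m) f l = tzero d m l"
    using Stilde_carrier[OF assms, of l] by (simp add: tmul_def tzero_apply)
qed

lemma tmul_tzero_right: assumes "f \<in> Stilde d m" shows "tmul f (tzero d m) = tzero d m"
proof (rule ext)
  fix l show "tmul f (tzero d m) l = tzero d m l"
    using Stilde_carrier[OF assms, of l] by (simp add: tmul_def tzero_apply)
qed

lemma tadd_tzero [simp]: "f \<in> Stilde d m \<Longrightarrow> tadd f (tzero d m) = f"
  by (rule ext) (simp add: tadd_def tzero_apply)

lemma tzero_tadd [simp]: "f \<in> Stilde d m \<Longrightarrow> tadd (tzero d m) f = f"
  by (rule ext) (simp add: tadd_def tzero_apply)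

lemma tsmult_zero [simp]: assumes "f \<in> Stilde d m" shows "tsmult 0 f = tzero d m"
proof (rule ext)
  fix l show "tsmult 0 f l = tzero d m l"
    using Stilde_carrier[OF assms, of l] by (auto simp: tsmult_def tzero_apply intro!: eq_matI)
qed

lemma tsmult_tzero [simp]: "tsmult c (tzero d m) = tzero d m"
  by (rule ext) (simp add: tsmult_def tzero_apply)

lemma tsmult_one [simp]: "tsmult 1 f = f"
  by (rule ext) (auto simp: tsmult_def)

lemma tsmult_tsmult: "tsmult (a::'a::comm_ring_1) (tsmult b f) = tsmult (a * b) f"
  by (rule ext) (auto simp: tsmult_def ac_simps)

definition lin_span3 ::
    "(nat \<Rightarrow> 'a::semiring_1 mat) \<Rightarrow> (nat \<Rightarrow> 'a mat) \<Rightarrow> (nat \<Rightarrow> 'a mat) \<Rightarrow> (nat \<Rightarrow> 'a mat) set" where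
  "lin_span3 y1 y2 y3 = {tadd (tadd (tsmult a y1) (tsmult b y2)) (tsmult c y3) | a b c. True}"

lemma lin_span3_tadd:
  fixes y1 :: "nat \<Rightarrow> 'a::comm_ring_1 mat"
  assumes "y1 \<in> Stilde d m" "y2 \<in> Stilde d m" "y3 \<in> Stilde d m"
  shows "tadd (tadd (tadd (tsmult a y1) (tsmult b y2)) (tsmult c y3))
              (tadd (tadd (tsmult a' y1) (tsmult b' y2)) (tsmult c' y3))
       = tadd (tadd (tsmult (a + a') y1) (tsmult (b + b') y2)) (tsmult (c + c') y3)"
    (is "?lhs = ?rhs")
proof (rule ext)
  fix l
  show "?lhs l = ?rhs l"
    using assms[THEN Stilde_carrier, of l]
    by (auto simp: tadd_def tsmult_def algebra_simps intro!: eq_matI)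
qed

lemma not_length_le_2_if_chain:
  assumes "is_submodule d m S M N0" "is_submodule d m S M N1" "is_submodule d m S M N2"
    "is_submodule d m S M N3" and "N0 \<subset> N1" "N1 \<subset> N2" "N2 \<subset> N3"
  shows "\<not> length_le d m S M 2"
proof
  assume len: "length_le d m S M 2"
  define N where "N i = (if i = 0 then N0 else if i = 1 then N1 else if i = 2 then N2 else N3)"
    for i :: nat
  have "is_submodule d m S M (N i)" if "i \<le> 3" for i
    using assms by (simp add: N_def)
  moreover have "N i \<subset> N (Suc i)" if "i < 3" for i
    using assms that by (auto simp: N_def less_Suc_eq numeral_3_eq_3)
  ultimately have "(3::nat) \<le> 2" using len unfolding length_le_def by blast
  then show False by simp
qed

section \<open>Matrix units, idempotents and conjugation\<close>

lemma neq_if_index_neq: "A $$ (i, j) \<noteq> B $$ (i, j) \<Longrightarrow> A \<noteq> B"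
  by auto

text \<open>With all dimensions equal, the simplifier can discharge the carrier premises, so this
  version of associativity works as a rewrite rule.\<close>

lemma assoc_mult_mat_sq:
  "A \<in> carrier_mat n n \<Longrightarrow> B \<in> carrier_mat n n \<Longrightarrow> C \<in> carrier_mat n n \<Longrightarrow> A * B * C = A * (B * C)"
  by (rule assoc_mult_mat)

definition mat_unit :: "nat \<Rightarrow> nat \<Rightarrow> nat \<Rightarrow> 'a::zero_neq_one mat" where
  "mat_unit n a b = mat n n (\<lambda>(i, j). if i = a \<and> j = b then 1 else 0)"

lemma mat_unit_carrier [simp]: "mat_unit n a b \<in> carrier_mat n n"
  by (simp add: mat_unit_def)

lemma dim_mat_unit [simp]: "dim_row (mat_unit n a b) = n" "dim_col (mat_unit n a b) = n"
  by (simp_all add: mat_unit_def)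

lemma index_mat_unit [simp]:
  "i < n \<Longrightarrow> j < n \<Longrightarrow> mat_unit n a b $$ (i, j) = (if i = a \<and> j = b then 1 else 0)"
  by (simp add: mat_unit_def)

lemma index_mult_mat_sum:
  assumes "A \<in> carrier_mat n n" "B \<in> carrier_mat n n" "i < n" "j < n"
  shows "(A * B) $$ (i, j) = (\<Sum>t<n. A $$ (i, t) * B $$ (t, j))"
  using assms by (simp add: scalar_prod_def atLeast0LessThan row_def col_def)

lemma index_mult_mat_unit:
  fixes A :: "'a::semiring_1 mat"
  assumes "A \<in> carrier_mat n n" "i < n" "j < n" "b < n"
  shows "(A * mat_unit n b c) $$ (i, j) = (if j = c then A $$ (i, b) else 0)"
proof -
  have "(A * mat_unit n b c) $$ (i, j) = (\<Sum>s<n. A $$ (i, s) * mat_unit n b c $$ (s, j))"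
    by (rule index_mult_mat_sum) (use assms in auto)
  also have "\<dots> = (\<Sum>s<n. if s = b then (if j = c then A $$ (i, b) else 0) else 0)"
    by (rule sum.cong) (use assms in auto)
  finally show ?thesis using assms(4) by simp
qed

lemma index_mult_mat_unit_sandwich:
  fixes A :: "'a::semiring_1 mat"
  assumes "A \<in> carrier_mat n n" "B \<in> carrier_mat n n" "i < n" "j < n" "b < n" "c < n"
  shows "(A * mat_unit n b c * B) $$ (i, j) = A $$ (i, b) * B $$ (c, j)"
proof -
  have "(A * mat_unit n b c * B) $$ (i, j) = (\<Sum>t<n. (A * mat_unit n b c) $$ (i, t) * B $$ (t, j))"
    by (rule index_mult_mat_sum) (use assms in auto)
  also have "\<dots> = (\<Sum>t<n. if t = c then A $$ (i, b) * B $$ (c, j) else 0)"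
    by (rule sum.cong) (use assms in \<open>auto simp: index_mult_mat_unit simp del: index_mult_mat\<close>)
  finally show ?thesis using assms(6) by simp
qed

lemma nonzero_mat_obtain_entry:
  assumes "A \<in> carrier_mat n n" "A \<noteq> 0\<^sub>m n n"
  obtains i j where "i < n" "j < n" "A $$ (i, j) \<noteq> 0"
  using assms by (metis eq_matI carrier_matD index_zero_mat(1,2,3))

lemma mat_unit_sandwich_nonzero:
  fixes F :: "'a::field mat"
  assumes F: "F \<in> carrier_mat n n" "F \<noteq> 0\<^sub>m n n" and E: "E \<in> carrier_mat n n" "E \<noteq> 0\<^sub>m n n"
  obtains b c where "b < n" "c < n" "F * mat_unit n b c * E \<noteq> 0\<^sub>m n n"
proof -
  obtain a b where ab: "a < n" "b < n" "F $$ (a, b) \<noteq> 0" using nonzero_mat_obtain_entry F by blast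
  obtain c x where cx: "c < n" "x < n" "E $$ (c, x) \<noteq> 0" using nonzero_mat_obtain_entry E by blast
  have "(F * mat_unit n b c * E) $$ (a, x) \<noteq> 0"
    using index_mult_mat_unit_sandwich[OF F(1) E(1) ab(1) cx(2) ab(2) cx(1)] ab cx by simp
  then show ?thesis using that ab cx by fastforce
qed

lemma idem_mult_sandwich:
  fixes G :: "'a::semiring_1 mat"
  assumes "G \<in> carrier_mat n n" "U \<in> carrier_mat n n" "E \<in> carrier_mat n n" "G * G = G"
  shows "G * (G * U * E) = G * U * E"
proof -
  have "G * (G * U * E) = G * G * U * E" using assms(1-3) by (simp add: assoc_mult_mat_sq)
  then show ?thesis using assms(4) by simp
qed

lemma orth_mult_sandwich:
  fixes G :: "'a::semiring_1 mat"
  assumes "G \<in> carrier_mat n n" "H \<in> carrier_mat n n" "U \<in> carrier_mat n n" "E \<in> carrier_mat n n"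
    "G * H = 0\<^sub>m n n"
  shows "G * (H * U * E) = 0\<^sub>m n n"
proof -
  have "G * (H * U * E) = G * H * U * E" using assms(1-4) by (simp add: assoc_mult_mat_sq)
  then show ?thesis using assms by simp
qed

lemma fixed_vector_eq_0_if_in_annihilated_span:
  fixes G :: "'a::comm_ring_1 mat"
  assumes "G \<in> carrier_mat n n" "X1 \<in> carrier_mat n n" "X2 \<in> carrier_mat n n"
    and "G * Y = Y" "G * X1 = 0\<^sub>m n n" "G * X2 = 0\<^sub>m n n" "Y = a \<cdot>\<^sub>m X1 + b \<cdot>\<^sub>m X2"
  shows "Y = 0\<^sub>m n n"
proof -
  have "Y = G * (a \<cdot>\<^sub>m X1 + b \<cdot>\<^sub>m X2)" using assms(4,7) by simp
  also have "\<dots> = G * (a \<cdot>\<^sub>m X1) + G * (b \<cdot>\<^sub>m X2)"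
    by (rule mult_add_distrib_mat) (use assms(1-3) in auto)
  also have "\<dots> = a \<cdot>\<^sub>m (G * X1) + b \<cdot>\<^sub>m (G * X2)"
    using assms(1-3) by (simp add: mult_smult_distrib)
  finally show ?thesis using assms(5,6) by simp
qed

lemma fixed_vector_eq_0_if_annihilated_multiple:
  fixes G :: "'a::comm_ring_1 mat"
  assumes "G \<in> carrier_mat n n" "X \<in> carrier_mat n n"
    and "G * Y = Y" "G * X = 0\<^sub>m n n" "Y = a \<cdot>\<^sub>m X"
  shows "Y = 0\<^sub>m n n"
proof -
  have "Y = G * (a \<cdot>\<^sub>m X)" using assms(3,5) by simp
  also have "\<dots> = a \<cdot>\<^sub>m (G * X)" by (rule mult_smult_distrib[OF assms(1,2)])
  finally show ?thesis using assms(4) by simp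
qed

definition col_rank_le_1 :: "nat \<Rightarrow> 'a::field mat \<Rightarrow> bool" where
  "col_rank_le_1 n A \<longleftrightarrow> (\<exists>u. \<forall>a<n. \<exists>\<alpha>. \<forall>x<n. A $$ (x, a) = \<alpha> * u x)"

lemma one_mat_neq_sum_col_rank_le_1:
  fixes E F :: "'a::field mat"
  assumes n: "3 \<le> n" and E: "E \<in> carrier_mat n n" and F: "F \<in> carrier_mat n n"
    and rE: "col_rank_le_1 n E" and rF: "col_rank_le_1 n F"
  shows "E + F \<noteq> 1\<^sub>m n"
proof
  assume EF: "E + F = 1\<^sub>m n"
  obtain u \<alpha> where \<alpha>: "\<forall>a<n. \<forall>x<n. E $$ (x, a) = \<alpha> a * u x"
    using rE unfolding col_rank_le_1_def by metis
  obtain w \<beta> where \<beta>: "\<forall>a<n. \<forall>x<n. F $$ (x, a) = \<beta> a * w x"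
    using rF unfolding col_rank_le_1_def by metis
  define A :: "'a mat" where "A = mat 3 3 (\<lambda>(x, j). if j = 0 then u x else if j = 1 then w x else 0)"
  define B :: "'a mat" where "B = mat 3 3 (\<lambda>(j, a). if j = 0 then \<alpha> a else if j = 1 then \<beta> a else 0)"
  have A: "A \<in> carrier_mat 3 3" and B: "B \<in> carrier_mat 3 3" by (simp_all add: A_def B_def)
  have "A * B = 1\<^sub>m 3"
  proof (rule eq_matI)
    fix x a assume "x < dim_row (1\<^sub>m 3 :: 'a mat)" "a < dim_col (1\<^sub>m 3 :: 'a mat)"
    then have xa: "x < 3" "a < 3" by auto
    have "(A * B) $$ (x, a) = (\<Sum>t<3. A $$ (x, t) * B $$ (t, a))"
      by (rule index_mult_mat_sum[OF A B xa])
    also have "\<dots> = E $$ (x, a) + F $$ (x, a)"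
      using xa n \<alpha> \<beta> by (simp add: numeral_3_eq_3 A_def B_def ac_simps)
    also have "\<dots> = 1\<^sub>m 3 $$ (x, a)"
      using xa n E F arg_cong[OF EF, of "\<lambda>X. X $$ (x, a)"] by simp
    finally show "(A * B) $$ (x, a) = 1\<^sub>m 3 $$ (x, a)" .
  qed (simp_all add: A_def B_def)
  then have "B * A = 1\<^sub>m 3" by (rule mat_mult_left_right_inverse[OF A B])
  moreover have "(B * A) $$ (2, 2) = (\<Sum>t<3. B $$ (2, t) * A $$ (t, 2))"
    by (rule index_mult_mat_sum[OF B A]) simp_all
  moreover have "\<dots> = 0" by (intro sum.neutral) (simp add: A_def)
  ultimately show False by simp
qed

lemma not_col_rank_le_1_obtain_columns:
  fixes G :: "'a::field mat"
  assumes "\<not> col_rank_le_1 n G"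
  obtains x0 c a where "x0 < n" "c < n" "a < n" "G $$ (x0, c) \<noteq> 0"
    "\<forall>\<alpha>. \<exists>x<n. G $$ (x, a) \<noteq> \<alpha> * G $$ (x, c)"
proof -
  obtain x0 c where xc: "x0 < n" "c < n" "G $$ (x0, c) \<noteq> 0"
  proof (rule ccontr)
    assume "\<not> thesis"
    then have "\<forall>a<n. \<forall>x<n. G $$ (x, a) = 0" using that by blast
    then have "\<forall>a<n. \<exists>\<alpha>. \<forall>x<n. G $$ (x, a) = \<alpha> * 0" by simp
    then have "col_rank_le_1 n G" unfolding col_rank_le_1_def by (rule exI[where x = "\<lambda>_. 0"])
    then show False using assms by blast
  qed
  have "\<not> (\<forall>a<n. \<exists>\<alpha>. \<forall>x<n. G $$ (x, a) = \<alpha> * G $$ (x, c))"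
  proof
    assume "\<forall>a<n. \<exists>\<alpha>. \<forall>x<n. G $$ (x, a) = \<alpha> * G $$ (x, c)"
    then have "col_rank_le_1 n G" unfolding col_rank_le_1_def by (rule exI[where x = "\<lambda>x. G $$ (x, c)"])
    then show False using assms by blast
  qed
  then obtain a where "a < n" "\<forall>\<alpha>. \<exists>x<n. G $$ (x, a) \<noteq> \<alpha> * G $$ (x, c)" by blast
  then show ?thesis by (rule that[OF xc(1,2) _ xc(3)])
qed

lemma sandwich_pair_if_not_col_rank_le_1:
  fixes G E :: "'a::field mat"
  assumes G: "G \<in> carrier_mat n n" and E: "E \<in> carrier_mat n n" "E \<noteq> 0\<^sub>m n n"
    and rk: "\<not> col_rank_le_1 n G"
  obtains a c c0 where "G * mat_unit n c c0 * E \<noteq> 0\<^sub>m n n"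
    "\<forall>\<alpha>. G * mat_unit n a c0 * E \<noteq> \<alpha> \<cdot>\<^sub>m (G * mat_unit n c c0 * E)"
proof -
  obtain c0 e0 where ce: "c0 < n" "e0 < n" "E $$ (c0, e0) \<noteq> 0"
    using nonzero_mat_obtain_entry[OF E] by blast
  obtain x0 c a where xca: "x0 < n" "c < n" "a < n" "G $$ (x0, c) \<noteq> 0"
    "\<forall>\<alpha>. \<exists>x<n. G $$ (x, a) \<noteq> \<alpha> * G $$ (x, c)"
    using not_col_rank_le_1_obtain_columns[OF rk] by blast
  let ?Y = "\<lambda>b. G * mat_unit n b c0 * E"
  have Y_index: "?Y b $$ (x, e0) = G $$ (x, b) * E $$ (c0, e0)" if "x < n" "b < n" for x b
    using index_mult_mat_unit_sandwich[OF G E(1) that(1) ce(2) that(2) ce(1)] .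
  have "?Y c \<noteq> 0\<^sub>m n n"
    using Y_index[OF xca(1,2)] xca ce by (intro neq_if_index_neq[where i = x0 and j = e0]) simp
  moreover have "?Y a \<noteq> \<alpha> \<cdot>\<^sub>m ?Y c" for \<alpha>
  proof
    assume "?Y a = \<alpha> \<cdot>\<^sub>m ?Y c"
    then have "?Y a $$ (x, e0) = \<alpha> * ?Y c $$ (x, e0)" if "x < n" for x
      using that ce(2) G E(1) by simp
    then have "G $$ (x, a) = \<alpha> * G $$ (x, c)" if "x < n" for x
      using that Y_index xca(2,3) ce(3) by simp
    then show False using xca(5) by blast
  qed
  ultimately show ?thesis using that by blast
qed

lemma idempotent_1_1:
  fixes E :: "'a::field mat"
  assumes "E \<in> carrier_mat 1 1" "E * E = E" "E \<noteq> 0\<^sub>m 1 1"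
  shows "E = 1\<^sub>m 1"
proof -
  have "E $$ (0, 0) * E $$ (0, 0) = E $$ (0, 0)"
    using index_mult_mat_sum[OF assms(1,1), of 0 0] assms(2) by simp
  moreover have "E $$ (0, 0) \<noteq> 0" using assms(1,3) by (auto intro!: eq_matI)
  ultimately show ?thesis using assms(1) by (auto intro!: eq_matI)
qed

lemma index_mult_mat_of_two_columns:
  fixes X A B :: "'a::semiring_1 mat"
  assumes "X \<in> carrier_mat n n" "A \<in> carrier_mat n n" "B \<in> carrier_mat n n"
    "x < n" "j < n" "a < n" "b < n"
  shows "(X * mat n n (\<lambda>(t, j). if j = 0 then A $$ (t, a) else B $$ (t, b))) $$ (x, j) =
    (if j = 0 then (X * A) $$ (x, a) else (X * B) $$ (x, b))"
  using assms
  by (cases "j = 0") (auto simp: index_mult_mat_sum[OF assms(1)] simp del: index_mult_mat intro!: sum.cong)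

lemma index_mat_of_two_rows_mult:
  fixes X A B :: "'a::comm_semiring_1 mat"
  assumes "X \<in> carrier_mat n n" "A \<in> carrier_mat n n" "B \<in> carrier_mat n n"
    "i < n" "y < n" "p < n" "q < n"
  shows "(mat n n (\<lambda>(i, t). if i = 0 then \<alpha> * A $$ (p, t) else \<beta> * B $$ (q, t)) * X) $$ (i, y) =
    (if i = 0 then \<alpha> * (A * X) $$ (p, y) else \<beta> * (B * X) $$ (q, y))"
  using assms
  by (cases "i = 0")
    (auto simp: index_mult_mat_sum[OF _ assms(1)] sum_distrib_left mult.assoc simp del: index_mult_mat
      intro!: sum.cong)

lemma orthogonal_idempotents_2_diagonalizable:
  fixes E F :: "'a::field mat"
  assumes E: "E \<in> carrier_mat 2 2" and F: "F \<in> carrier_mat 2 2"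
    and EE: "E * E = E" and FF: "F * F = F" and EF: "E * F = 0\<^sub>m 2 2" and FE: "F * E = 0\<^sub>m 2 2"
    and E0: "E \<noteq> 0\<^sub>m 2 2" and F0: "F \<noteq> 0\<^sub>m 2 2"
  obtains P Q where "P \<in> carrier_mat 2 2" "Q \<in> carrier_mat 2 2" "Q * P = 1\<^sub>m 2"
    "Q * E * P = mat_unit 2 0 0" "Q * F * P = mat_unit 2 1 1"
proof -
  obtain i0 j0 where ij0: "i0 < 2" "j0 < 2" "E $$ (i0, j0) \<noteq> 0"
    using nonzero_mat_obtain_entry[OF E E0] by blast
  obtain i1 j1 where ij1: "i1 < 2" "j1 < 2" "F $$ (i1, j1) \<noteq> 0"
    using nonzero_mat_obtain_entry[OF F F0] by blast
  define P :: "'a mat" where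
    "P = mat 2 2 (\<lambda>(x, j). if j = 0 then E $$ (x, j0) else F $$ (x, j1))"
  define Q :: "'a mat" where "Q = mat 2 2 (\<lambda>(i, t).
    if i = 0 then inverse (E $$ (i0, j0)) * E $$ (i0, t) else inverse (F $$ (i1, j1)) * F $$ (i1, t))"
  have P: "P \<in> carrier_mat 2 2" and Q: "Q \<in> carrier_mat 2 2" by (simp_all add: P_def Q_def)
  have mult_P: "(X * P) $$ (x, j) = (if j = 0 then (X * E) $$ (x, j0) else (X * F) $$ (x, j1))"
    if "X \<in> carrier_mat 2 2" "x < 2" "j < 2" for X x j
    unfolding P_def using index_mult_mat_of_two_columns[OF that(1) E F that(2,3) ij0(2) ij1(2)] .
  have mult_Q: "(Q * X) $$ (i, y) = (if i = 0 then inverse (E $$ (i0, j0)) * (E * X) $$ (i0, y)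
      else inverse (F $$ (i1, j1)) * (F * X) $$ (i1, y))"
    if "X \<in> carrier_mat 2 2" "i < 2" "y < 2" for X i y
    unfolding Q_def using index_mat_of_two_rows_mult[OF that(1) E F that(2,3) ij0(1) ij1(1)] .
  have QP: "Q * P = 1\<^sub>m 2"
  proof (rule eq_matI)
    fix i j assume "i < dim_row (1\<^sub>m 2 :: 'a mat)" "j < dim_col (1\<^sub>m 2 :: 'a mat)"
    then have "i < 2" "j < 2" by auto
    then show "(Q * P) $$ (i, j) = 1\<^sub>m 2 $$ (i, j)"
      using ij0 ij1 by (auto simp: mult_P[OF Q] mult_Q[OF E] mult_Q[OF F] EE FF EF FE less_2_cases_iff)
  qed (use P Q in auto)
  have P_index: "P $$ (x, j) = (if j = 0 then E $$ (x, j0) else F $$ (x, j1))"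
    if "x < 2" "j < 2" for x j
    using that by (simp add: P_def)
  have EP: "E * P = P * mat_unit 2 0 0"
  proof (rule eq_matI)
    fix x j assume "x < dim_row (P * mat_unit 2 0 0)" "j < dim_col (P * mat_unit 2 0 0)"
    then have "x < 2" "j < 2" using P by auto
    then show "(E * P) $$ (x, j) = (P * mat_unit 2 0 0) $$ (x, j)"
      using ij0 ij1 by (simp add: mult_P[OF E] index_mult_mat_unit[OF P] P_index EE EF del: index_mult_mat)
  qed (use E P in auto)
  have FP: "F * P = P * mat_unit 2 1 1"
  proof (rule eq_matI)
    fix x j assume "x < dim_row (P * mat_unit 2 1 1)" "j < dim_col (P * mat_unit 2 1 1)"
    then have "x < 2" "j < 2" using P by auto
    then show "(F * P) $$ (x, j) = (P * mat_unit 2 1 1) $$ (x, j)"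
      using ij0 ij1
      by (auto simp: mult_P[OF F] index_mult_mat_unit[OF P] P_index FF FE less_2_cases_iff
          simp del: index_mult_mat)
  qed (use F P in auto)
  have "Q * E * P = (Q * P) * mat_unit 2 0 0" and "Q * F * P = (Q * P) * mat_unit 2 1 1"
    using EP FP P Q E F by (simp_all add: assoc_mult_mat_sq)
  then show ?thesis using that P Q QP by simp
qed

lemma mat_alg_iso_conj:
  fixes P Q :: "'a::field mat"
  assumes P: "P \<in> carrier_mat n n" and Q: "Q \<in> carrier_mat n n" and QP: "Q * P = 1\<^sub>m n"
  shows "mat_alg_iso n (\<lambda>A. Q * A * P)"
proof -
  have PQ: "P * Q = 1\<^sub>m n" by (rule mat_mult_left_right_inverse[OF Q P QP])
  have cancel: "P * (Q * X) = X" "Q * (P * X) = X" if "X \<in> carrier_mat n n" for X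
    using assoc_mult_mat[OF P Q that] assoc_mult_mat[OF Q P that] PQ QP that by simp_all
  have "bij_betw (\<lambda>A. Q * A * P) (carrier_mat n n) (carrier_mat n n)"
    by (rule bij_betw_byWitness[where f' = "\<lambda>A. P * A * Q"])
      (use P Q PQ QP in \<open>auto simp: assoc_mult_mat_sq cancel\<close>)
  moreover have "Q * (A + B) * P = Q * A * P + Q * B * P" "Q * (A * B) * P = Q * A * P * (Q * B * P)"
    if A: "A \<in> carrier_mat n n" and B: "B \<in> carrier_mat n n" for A B
  proof -
    have "Q * (A + B) = Q * A + Q * B" by (rule mult_add_distrib_mat[OF Q A B])
    then show "Q * (A + B) * P = Q * A * P + Q * B * P"
      using add_mult_distrib_mat[OF mult_carrier_mat[OF Q A] mult_carrier_mat[OF Q B] P] by simp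
    show "Q * (A * B) * P = Q * A * P * (Q * B * P)"
      using A B P Q by (simp add: assoc_mult_mat_sq cancel)
  qed
  moreover have "Q * (c \<cdot>\<^sub>m A) * P = c \<cdot>\<^sub>m (Q * A * P)" if "A \<in> carrier_mat n n" for c A
    using mult_smult_distrib[OF Q that] mult_smult_assoc_mat[OF mult_carrier_mat[OF Q that] P] by simp
  ultimately show ?thesis using P Q QP unfolding mat_alg_iso_def by auto
qed

lemma mat_alg_iso_image_lin_span2:
  assumes "mat_alg_iso n \<psi>" "E \<in> carrier_mat n n" "F \<in> carrier_mat n n"
  shows "\<psi> ` {a \<cdot>\<^sub>m E + b \<cdot>\<^sub>m F | a b. True} = {a \<cdot>\<^sub>m \<psi> E + b \<cdot>\<^sub>m \<psi> F | a b. True}"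
proof -
  have lin: "\<psi> (a \<cdot>\<^sub>m E + b \<cdot>\<^sub>m F) = a \<cdot>\<^sub>m \<psi> E + b \<cdot>\<^sub>m \<psi> F" for a b
    using assms unfolding mat_alg_iso_def by (metis smult_carrier_mat)
  show ?thesis
  proof (intro equalityI subsetI)
    fix A assume "A \<in> \<psi> ` {a \<cdot>\<^sub>m E + b \<cdot>\<^sub>m F | a b. True}"
    then show "A \<in> {a \<cdot>\<^sub>m \<psi> E + b \<cdot>\<^sub>m \<psi> F | a b. True}" using lin by blast
  next
    fix A assume "A \<in> {a \<cdot>\<^sub>m \<psi> E + b \<cdot>\<^sub>m \<psi> F | a b. True}"
    then obtain a b where "A = a \<cdot>\<^sub>m \<psi> E + b \<cdot>\<^sub>m \<psi> F" by blast
    then have "A = \<psi> (a \<cdot>\<^sub>m E + b \<cdot>\<^sub>m F)" using lin by simp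
    then show "A \<in> \<psi> ` {a \<cdot>\<^sub>m E + b \<cdot>\<^sub>m F | a b. True}" by blast
  qed
qed

lemma diagonal_mats_2_eq:
  "{a \<cdot>\<^sub>m mat_unit 2 0 0 + b \<cdot>\<^sub>m mat_unit 2 1 1 | a b. True} =
   {A \<in> carrier_mat 2 2. A $$ (0, 1) = 0 \<and> A $$ (1, 0) = (0::'a::field)}"
proof -
  have "A = A $$ (0, 0) \<cdot>\<^sub>m mat_unit 2 0 0 + A $$ (1, 1) \<cdot>\<^sub>m mat_unit 2 1 1"
    if "A \<in> carrier_mat 2 2" "A $$ (0, 1) = 0" "A $$ (1, 0) = (0::'a)" for A
    using that by (auto simp: less_2_cases_iff intro!: eq_matI)
  then show ?thesis by auto
qed

section \<open>The idempotents of S\<close>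

definition kdelta :: "nat \<Rightarrow> nat \<Rightarrow> 'a::zero_neq_one" where
  "kdelta q = (\<lambda>l. if l = q then 1 else 0)"

locale split_subalgebra =
  fixes d :: "nat \<Rightarrow> nat" and m r :: nat and \<phi> :: "(nat \<Rightarrow> 'a::field) \<Rightarrow> nat \<Rightarrow> 'a mat"
  assumes emb: "alg_embedding d m r \<phi>"
begin

abbreviation D :: "nat \<Rightarrow> nat" where "D \<equiv> comp_dim d m"
abbreviation e :: "nat \<Rightarrow> nat \<Rightarrow> 'a mat" where "e \<equiv> sidem \<phi>"
abbreviation M :: "nat \<Rightarrow> (nat \<Rightarrow> 'a mat) set" where "M \<equiv> tens_mod d m \<phi>"

lemma phi_Stilde: "v \<in> kpow r \<Longrightarrow> \<phi> v \<in> Stilde d m"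
  using emb unfolding alg_embedding_def by blast

lemma phi_add: "v \<in> kpow r \<Longrightarrow> w \<in> kpow r \<Longrightarrow> \<phi> (\<lambda>l. v l + w l) = tadd (\<phi> v) (\<phi> w)"
  using emb unfolding alg_embedding_def by blast

lemma phi_mult: "v \<in> kpow r \<Longrightarrow> w \<in> kpow r \<Longrightarrow> \<phi> (\<lambda>l. v l * w l) = tmul (\<phi> v) (\<phi> w)"
  using emb unfolding alg_embedding_def by blast

lemma phi_smult: "v \<in> kpow r \<Longrightarrow> \<phi> (\<lambda>l. c * v l) = tsmult c (\<phi> v)"
  using emb unfolding alg_embedding_def by blast

lemma phi_kunit: "\<phi> (kunit r) = tone d m"
  using emb unfolding alg_embedding_def by blast

lemma phi_inj: "inj_on \<phi> (kpow r)"
  using emb unfolding alg_embedding_def by blast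

lemma zero_kpow: "(\<lambda>l. 0) \<in> kpow r"
  by (simp add: kpow_def)

lemma kdelta_kpow: "q < r \<Longrightarrow> kdelta q \<in> kpow r"
  by (simp add: kpow_def kdelta_def)

lemma phi_zero: "\<phi> (\<lambda>l. 0) = tzero d m"
proof -
  have "\<phi> (\<lambda>l. 0 * 0) = tsmult 0 (\<phi> (\<lambda>l. 0))" by (rule phi_smult[OF zero_kpow])
  then show ?thesis using tsmult_zero[OF phi_Stilde[OF zero_kpow]] by simp
qed

lemma e_eq: "e q = \<phi> (kdelta q)"
  by (simp add: sidem_def kdelta_def)

lemma e_Stilde: "q < r \<Longrightarrow> e q \<in> Stilde d m"
  by (simp add: e_eq phi_Stilde kdelta_kpow)

lemma e_carrier [simp]: "q < r \<Longrightarrow> e q l \<in> carrier_mat (D l) (D l)"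
  by (simp add: e_Stilde)

lemma e_neq_tzero: assumes "q < r" shows "e q \<noteq> tzero d m"
proof
  assume "e q = tzero d m"
  then have "\<phi> (kdelta q) = \<phi> (\<lambda>l. 0)" by (simp add: e_eq phi_zero)
  then have "kdelta q = (\<lambda>l. 0::'a)"
    by (rule inj_onD[OF phi_inj _ kdelta_kpow[OF assms] zero_kpow])
  then show False by (metis kdelta_def one_neq_zero)
qed

lemma phi_mult_e: assumes "v \<in> kpow r" "q < r" shows "tmul (\<phi> v) (e q) = tsmult (v q) (e q)"
proof -
  have "(\<lambda>l. v l * kdelta q l) = (\<lambda>l. v q * kdelta q l)" by (auto simp: kdelta_def)
  then show ?thesis
    using phi_mult[OF assms(1) kdelta_kpow[OF assms(2)]] phi_smult[OF kdelta_kpow[OF assms(2)]]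
    by (simp add: e_eq)
qed

lemma e_idem: "q < r \<Longrightarrow> e q l * e q l = e q l"
  using phi_mult_e[OF kdelta_kpow] by (metis e_eq kdelta_def tmul_def tsmult_one)

lemma e_orth: assumes "p < r" "q < r" "p \<noteq> q" shows "e p l * e q l = 0\<^sub>m (D l) (D l)"
  using phi_mult_e[OF kdelta_kpow[OF assms(1)] assms(2)] assms
  by (metis e_eq e_Stilde kdelta_def tmul_def tsmult_zero tzero_apply)

lemma Sfac_eq: assumes "k < r" shows "Sfac \<phi> k = {tsmult c (e k) | c. True}"
proof -
  have phi_kdelta: "\<phi> (\<lambda>l. c * kdelta k l) = tsmult c (e k)" for c
    by (simp add: phi_smult[OF kdelta_kpow[OF assms]] e_eq)
  show ?thesis
  proof (intro equalityI subsetI)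
    fix y assume "y \<in> Sfac \<phi> k"
    then obtain v where v: "\<forall>l. l \<noteq> k \<longrightarrow> v l = 0" and y: "y = \<phi> v"
      unfolding Sfac_def by blast
    have "v = (\<lambda>l. v k * kdelta k l)" using v by (auto simp: kdelta_def)
    then have "y = tsmult (v k) (e k)" using y phi_kdelta by metis
    then show "y \<in> {tsmult c (e k) | c. True}" by blast
  next
    fix y assume "y \<in> {tsmult c (e k) | c. True}"
    then obtain c where "y = \<phi> (\<lambda>l. c * kdelta k l)" using phi_kdelta by auto
    moreover have "\<forall>l. l \<noteq> k \<longrightarrow> c * kdelta k l = 0" by (simp add: kdelta_def)
    ultimately show "y \<in> Sfac \<phi> k" unfolding Sfac_def by blast
  qed
qed

lemma phi_component_zero:
  assumes "v \<in> kpow r" "\<forall>q<r. e q l \<noteq> 0\<^sub>m (D l) (D l) \<longrightarrow> v q = 0"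
  shows "\<phi> v l = 0\<^sub>m (D l) (D l)"
proof -
  have "\<phi> v l = 0\<^sub>m (D l) (D l)"
    if "n \<le> r" "\<forall>x\<ge>n. v x = 0" "\<forall>q<n. e q l \<noteq> 0\<^sub>m (D l) (D l) \<longrightarrow> v q = 0" for n v
    using that
  proof (induction n arbitrary: v)
    case 0
    then have "v = (\<lambda>l. 0)" by auto
    then show ?case by (simp add: phi_zero tzero_apply)
  next
    case (Suc n)
    define w where "w = (\<lambda>x. if x < n then v x else 0)"
    have w: "w \<in> kpow r" using Suc.prems(1) by (auto simp: w_def kpow_def)
    have n: "n < r" using Suc.prems(1) by simp
    have vn: "(\<lambda>x. v n * kdelta n x) \<in> kpow r" using n by (simp add: kpow_def kdelta_def)
    have "v = (\<lambda>x. w x + v n * kdelta n x)"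
      using Suc.prems(2) by (auto simp: w_def kdelta_def not_less less_Suc_eq)
    then have "\<phi> v = \<phi> (\<lambda>x. w x + v n * kdelta n x)" by (rule arg_cong)
    also have "\<dots> = tadd (\<phi> w) (tsmult (v n) (e n))"
      by (simp add: phi_add[OF w vn] phi_smult[OF kdelta_kpow[OF n]] e_eq)
    finally have "\<phi> v = tadd (\<phi> w) (tsmult (v n) (e n))" .
    moreover have "\<phi> w l = 0\<^sub>m (D l) (D l)"
      using Suc.IH[of w] Suc.prems by (auto simp: w_def)
    moreover have "v n \<cdot>\<^sub>m e n l = 0\<^sub>m (D l) (D l)"
      using Suc.prems(3) e_carrier[OF n, of l] by (cases "v n = 0") auto
    ultimately show ?case by (simp add: tadd_def tsmult_def)
  qed
  then show ?thesis using assms by (auto simp: kpow_def)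
qed

lemma phi_component_one:
  assumes "v \<in> kpow r" "\<forall>q<r. e q l \<noteq> 0\<^sub>m (D l) (D l) \<longrightarrow> v q = 1"
  shows "\<phi> v l = 1\<^sub>m (D l)"
proof -
  define w where "w = (\<lambda>x. kunit r x - v x)"
  have w: "w \<in> kpow r" using assms(1) by (simp add: w_def kpow_def kunit_def)
  have "kunit r = (\<lambda>x. v x + w x)" by (simp add: w_def)
  then have "tone d m = tadd (\<phi> v) (\<phi> w)" using phi_kunit phi_add[OF assms(1) w] by simp
  moreover have "\<phi> w l = 0\<^sub>m (D l) (D l)"
    using phi_component_zero[OF w] assms(2) by (simp add: w_def kunit_def)
  ultimately have "1\<^sub>m (D l) = \<phi> v l + 0\<^sub>m (D l) (D l)"
    by (metis tone_apply tadd_def)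
  then show ?thesis using phi_Stilde[OF assms(1), THEN Stilde_carrier, of l] by simp
qed

lemma e_component_eq_one:
  assumes "k < r" "\<forall>q<r. q \<noteq> k \<longrightarrow> e q l = 0\<^sub>m (D l) (D l)"
  shows "e k l = 1\<^sub>m (D l)"
  using phi_component_one[OF kdelta_kpow[OF assms(1)]] assms(2)
  by (auto simp: e_eq kdelta_def)

lemma e_component_sum_eq_one:
  assumes "k < r" "q < r" "k \<noteq> q" "\<forall>p<r. p \<noteq> k \<and> p \<noteq> q \<longrightarrow> e p l = 0\<^sub>m (D l) (D l)"
  shows "e k l + e q l = 1\<^sub>m (D l)"
proof -
  have "\<phi> (\<lambda>x. kdelta k x + kdelta q x) l = 1\<^sub>m (D l)"
    using assms by (intro phi_component_one) (auto simp: kpow_def kdelta_def)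
  then show ?thesis
    using phi_add[OF kdelta_kpow[OF assms(1)] kdelta_kpow[OF assms(2)]] by (simp add: e_eq tadd_def)
qed

lemma exists_other_e_component:
  assumes "k < r" "e k l \<noteq> 1\<^sub>m (D l)"
  shows "\<exists>q<r. q \<noteq> k \<and> e q l \<noteq> 0\<^sub>m (D l) (D l)"
  using e_component_eq_one assms by blast

section \<open>Weight vectors and the length bound\<close>

definition weight_vector :: "(nat \<Rightarrow> 'a mat) \<Rightarrow> bool" where
  "weight_vector y \<longleftrightarrow> (\<exists>q<r. tmul (e q) y = y)"

lemma phi_mult_weight_vector:
  assumes "v \<in> kpow r" "q < r" "y \<in> Stilde d m" "tmul (e q) y = y"
  shows "tmul (\<phi> v) y = tsmult (v q) y"
proof -
  have "tmul (\<phi> v) y = tmul (\<phi> v) (tmul (e q) y)" using assms(4) by simp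
  also have "\<dots> = tmul (tmul (\<phi> v) (e q)) y"
    using tmul_assoc[OF phi_Stilde[OF assms(1)] e_Stilde[OF assms(2)] assms(3)] by simp
  also have "\<dots> = tsmult (v q) (tmul (e q) y)"
    using tmul_tsmult_left[OF e_Stilde[OF assms(2)] assms(3)] by (simp add: phi_mult_e assms(1,2))
  finally show ?thesis using assms(4) by simp
qed

lemma M_Stilde: "k < r \<Longrightarrow> x \<in> M k \<Longrightarrow> x \<in> Stilde d m"
  unfolding tens_mod_def using e_Stilde by auto

lemma tmul_e_M: "a \<in> Stilde d m \<Longrightarrow> tmul a (e k) \<in> M k"
  unfolding tens_mod_def by blast

lemma tzero_M: assumes "k < r" shows "tzero d m \<in> M k"
  using tmul_e_M[OF tzero_Stilde, of k] tmul_tzero_left[OF e_Stilde[OF assms]] by simp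

lemma tadd_M: assumes "k < r" "x \<in> M k" "y \<in> M k" shows "tadd x y \<in> M k"
proof -
  obtain a b where ab: "a \<in> Stilde d m" "b \<in> Stilde d m" "x = tmul a (e k)" "y = tmul b (e k)"
    using assms unfolding tens_mod_def by blast
  then have "tadd x y = tmul (tadd a b) (e k)"
    using tmul_tadd_left[OF ab(1,2) e_Stilde[OF assms(1)]] by simp
  then show ?thesis using tmul_e_M ab by simp
qed

lemma tsmult_M: assumes "k < r" "x \<in> M k" shows "tsmult c x \<in> M k"
proof -
  obtain a where a: "a \<in> Stilde d m" "x = tmul a (e k)"
    using assms unfolding tens_mod_def by blast
  then have "tsmult c x = tmul (tsmult c a) (e k)"
    using tmul_tsmult_left[OF a(1) e_Stilde[OF assms(1)]] by simp
  then show ?thesis using tmul_e_M a by simp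
qed

lemma lin_span3_submodule:
  assumes k: "k < r" and y: "y1 \<in> M k" "y2 \<in> M k" "y3 \<in> M k"
    and wv: "weight_vector y1" "weight_vector y2" "weight_vector y3"
  shows "is_submodule d m (Ssub r \<phi>) (M k) (lin_span3 y1 y2 y3)"
proof -
  have St: "y1 \<in> Stilde d m" "y2 \<in> Stilde d m" "y3 \<in> Stilde d m" using y M_Stilde k by auto
  obtain q1 q2 q3 where q: "q1 < r" "q2 < r" "q3 < r"
    "tmul (e q1) y1 = y1" "tmul (e q2) y2 = y2" "tmul (e q3) y3 = y3"
    using wv unfolding weight_vector_def by blast
  have "lin_span3 y1 y2 y3 \<subseteq> M k"
    unfolding lin_span3_def using tadd_M tsmult_M k y by auto
  moreover have "tzero d m \<in> lin_span3 y1 y2 y3"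
    unfolding lin_span3_def using St by (auto intro!: exI[of _ 0])
  moreover have "tadd x y \<in> lin_span3 y1 y2 y3"
    if "x \<in> lin_span3 y1 y2 y3" "y \<in> lin_span3 y1 y2 y3" for x y
    using that lin_span3_tadd[OF St] unfolding lin_span3_def by blast
  moreover have "tmul s x \<in> lin_span3 y1 y2 y3" if s: "s \<in> Ssub r \<phi>" and x: "x \<in> lin_span3 y1 y2 y3" for s x
  proof -
    obtain v where v: "v \<in> kpow r" "s = \<phi> v" using s unfolding Ssub_def by blast
    obtain a b c where x: "x = tadd (tadd (tsmult a y1) (tsmult b y2)) (tsmult c y3)"
      using x unfolding lin_span3_def by blast
    have "tmul s x = tadd (tadd (tsmult a (tmul s y1)) (tsmult b (tmul s y2))) (tsmult c (tmul s y3))"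
      unfolding x using St v phi_Stilde
      by (simp add: tmul_tadd_right[where d = d and m = m] tmul_tsmult_right[where d = d and m = m])
    also have "\<dots> = tadd (tadd (tsmult (a * v q1) y1) (tsmult (b * v q2) y2)) (tsmult (c * v q3) y3)"
      using phi_mult_weight_vector[OF v(1) q(1) St(1) q(4)] phi_mult_weight_vector[OF v(1) q(2) St(2) q(5)]
        phi_mult_weight_vector[OF v(1) q(3) St(3) q(6)] v(2) by (simp add: tsmult_tsmult)
    finally show ?thesis unfolding lin_span3_def by blast
  qed
  ultimately show ?thesis unfolding is_submodule_def by blast
qed

lemma not_length_le_2_if_independent:
  assumes k: "k < r" and y: "y1 \<in> M k" "y2 \<in> M k" "y3 \<in> M k"
    and wv: "weight_vector y1" "weight_vector y2" "weight_vector y3"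
    and indep: "y1 \<noteq> tzero d m" "\<forall>c. y2 \<noteq> tsmult c y1"
      "\<forall>a b. y3 \<noteq> tadd (tsmult a y1) (tsmult b y2)"
  shows "\<not> length_le d m (Ssub r \<phi>) (M k) 2"
proof -
  have St: "y1 \<in> Stilde d m" "y2 \<in> Stilde d m" "y3 \<in> Stilde d m" using y M_Stilde k by auto
  have z: "tzero d m \<in> M k" "weight_vector (tzero d m)"
    using tzero_M[OF k] tmul_tzero_right[OF e_Stilde[OF k]] k unfolding weight_vector_def by auto
  let ?N0 = "lin_span3 (tzero d m) (tzero d m) (tzero d m)" and ?N1 = "lin_span3 y1 (tzero d m) (tzero d m)"
    and ?N2 = "lin_span3 y1 y2 (tzero d m)" and ?N3 = "lin_span3 y1 y2 y3"
  have N: "?N0 = {tzero d m}" "?N1 = {tsmult a y1 | a. True}"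
    "?N2 = {tadd (tsmult a y1) (tsmult b y2) | a b. True}"
    using St by (simp_all add: lin_span3_def)
  have "?N0 \<subseteq> ?N1" using St unfolding N by (auto intro: exI[of _ 0])
  moreover have "?N1 \<subseteq> ?N2"
  proof
    fix x assume "x \<in> ?N1"
    then obtain a where "x = tadd (tsmult a y1) (tsmult 0 y2)" using St unfolding N by auto
    then show "x \<in> ?N2" unfolding N by blast
  qed
  moreover have "?N2 \<subseteq> ?N3"
  proof
    fix x assume "x \<in> ?N2"
    then obtain a b where "x = tadd (tadd (tsmult a y1) (tsmult b y2)) (tsmult 0 y3)"
      using St unfolding N by auto
    then show "x \<in> ?N3" unfolding lin_span3_def by blast
  qed
  moreover have "y1 = tsmult 1 y1" "y2 = tadd (tsmult 0 y1) (tsmult 1 y2)"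
    "y3 = tadd (tadd (tsmult 0 y1) (tsmult 0 y2)) (tsmult 1 y3)"
    using St by simp_all
  then have "y1 \<in> ?N1" "y2 \<in> ?N2" "y3 \<in> ?N3" unfolding N(2,3) lin_span3_def[of y1 y2 y3] by blast+
  moreover have "y1 \<notin> ?N0" "y2 \<notin> ?N1" "y3 \<notin> ?N2" using indep unfolding N by auto
  ultimately have strict: "?N0 \<subset> ?N1" "?N1 \<subset> ?N2" "?N2 \<subset> ?N3" by blast+
  show ?thesis
    by (rule not_length_le_2_if_chain[OF lin_span3_submodule[OF k z(1) z(1) z(1) z(2) z(2) z(2)]
          lin_span3_submodule[OF k y(1) z(1) z(1) wv(1) z(2) z(2)]
          lin_span3_submodule[OF k y(1) y(2) z(1) wv(1) wv(2) z(2)]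
          lin_span3_submodule[OF k y wv] strict])
qed

definition single_comp :: "nat \<Rightarrow> 'a mat \<Rightarrow> nat \<Rightarrow> 'a mat" where
  "single_comp l A = (\<lambda>x. if x = l then A else zcomp d m x)"

lemma single_comp_apply: "single_comp l A x = (if x = l then A else 0\<^sub>m (D x) (D x))"
  by (simp add: single_comp_def zcomp_eq)

definition comp_weight_vector :: "nat \<Rightarrow> nat \<Rightarrow> 'a mat \<Rightarrow> bool" where
  "comp_weight_vector k l Y \<longleftrightarrow>
     (\<exists>X\<in>carrier_mat (D l) (D l). Y = X * e k l) \<and> (\<exists>q<r. e q l * Y = Y)"

lemma single_comp_M:
  assumes k: "k < r" and Y: "comp_weight_vector k l Y"
  shows "single_comp l Y \<in> M k"
proof -
  obtain X where X: "X \<in> carrier_mat (D l) (D l)" "Y = X * e k l"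
    using Y unfolding comp_weight_vector_def by blast
  have "tmul (single_comp l X) (e k) = single_comp l Y"
  proof (rule ext)
    fix x show "tmul (single_comp l X) (e k) x = single_comp l Y x"
      using e_carrier[OF k, of x] X by (simp add: tmul_def single_comp_apply)
  qed
  moreover have "single_comp l X \<in> Stilde d m"
    using X(1) by (simp add: mem_Stilde_iff single_comp_apply)
  ultimately show ?thesis using tmul_e_M by metis
qed

lemma weight_vector_single_comp:
  assumes Y: "comp_weight_vector k l Y"
  shows "weight_vector (single_comp l Y)"
proof -
  obtain q where q: "q < r" "e q l * Y = Y" using Y unfolding comp_weight_vector_def by blast
  have "tmul (e q) (single_comp l Y) = single_comp l Y"
  proof (rule ext)
    fix x show "tmul (e q) (single_comp l Y) x = single_comp l Y x"
      using e_carrier[OF q(1), of x] q(2) by (simp add: tmul_def single_comp_apply)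
  qed
  then show ?thesis using q(1) unfolding weight_vector_def by blast
qed

lemma comp_weight_vector_sandwich:
  assumes "k < r" "q < r" "U \<in> carrier_mat (D l) (D l)"
  shows "comp_weight_vector k l (e q l * U * e k l)"
proof -
  have "e q l * U \<in> carrier_mat (D l) (D l)" by (rule mult_carrier_mat[OF e_carrier[OF assms(2)] assms(3)])
  then show ?thesis
    using assms(2) idem_mult_sandwich[OF e_carrier[OF assms(2)] assms(3) e_carrier[OF assms(1)] e_idem[OF assms(2)]]
    unfolding comp_weight_vector_def by blast
qed

lemma comp_weight_vector_e: assumes "k < r" shows "comp_weight_vector k l (e k l)"
  using comp_weight_vector_sandwich[OF assms assms one_carrier_mat, of l]
    right_mult_one_mat[OF e_carrier[OF assms]] e_idem[OF assms] by simp

lemma not_length_le_2_if_pair_in_component: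
  assumes k: "k < r" and Y: "comp_weight_vector k l Y1" "comp_weight_vector k l Y2"
    and indep: "Y1 \<noteq> 0\<^sub>m (D l) (D l)" "\<forall>c. Y2 \<noteq> c \<cdot>\<^sub>m Y1"
    and y3: "y3 \<in> M k" "weight_vector y3"
      "\<forall>a b. y3 \<noteq> tadd (tsmult a (single_comp l Y1)) (tsmult b (single_comp l Y2))"
  shows "\<not> length_le d m (Ssub r \<phi>) (M k) 2"
proof (rule not_length_le_2_if_independent[OF k single_comp_M[OF k Y(1)] single_comp_M[OF k Y(2)]
      y3(1) weight_vector_single_comp[OF Y(1)] weight_vector_single_comp[OF Y(2)] y3(2) _ _ y3(3)])
  show "single_comp l Y1 \<noteq> tzero d m"
    using indep(1) by (auto dest!: fun_cong[where x = l] simp: single_comp_apply tzero_apply)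
  show "\<forall>c. single_comp l Y2 \<noteq> tsmult c (single_comp l Y1)"
    using indep(2) by (auto dest!: fun_cong[where x = l] simp: single_comp_apply tsmult_def)
qed

lemma not_length_le_2_if_triple_in_component:
  assumes k: "k < r"
    and Y: "comp_weight_vector k l Y1" "comp_weight_vector k l Y2" "comp_weight_vector k l Y3"
    and indep: "Y1 \<noteq> 0\<^sub>m (D l) (D l)" "\<forall>c. Y2 \<noteq> c \<cdot>\<^sub>m Y1"
      "\<forall>a b. Y3 \<noteq> a \<cdot>\<^sub>m Y1 + b \<cdot>\<^sub>m Y2"
  shows "\<not> length_le d m (Ssub r \<phi>) (M k) 2"
  by (rule not_length_le_2_if_pair_in_component[OF k Y(1,2) indep(1,2)
        single_comp_M[OF k Y(3)] weight_vector_single_comp[OF Y(3)]])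
    (use indep(3) in \<open>auto dest!: fun_cong[where x = l] simp: single_comp_apply tsmult_def tadd_def\<close>)

lemma dim_le_1_if_e_component_one:
  assumes k: "k < r" and len: "length_le d m (Ssub r \<phi>) (M k) 2" and E: "e k l = 1\<^sub>m (D l)"
  shows "D l \<le> 1"
proof (rule ccontr)
  assume "\<not> D l \<le> 1"
  then have n: "0 < D l" "1 < D l" by auto
  have "comp_weight_vector k l (mat_unit (D l) a b)" for a b
    using comp_weight_vector_sandwich[OF k k mat_unit_carrier, of l a b] E by simp
  moreover have "mat_unit (D l) 0 0 \<noteq> (0\<^sub>m (D l) (D l) :: 'a mat)"
    using n by (intro neq_if_index_neq[where i = 0 and j = 0]) simp
  moreover have "\<forall>c. mat_unit (D l) 0 1 \<noteq> c \<cdot>\<^sub>m (mat_unit (D l) 0 0 :: 'a mat)"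
    using n by (auto intro!: neq_if_index_neq[where i = 0 and j = 1])
  moreover have
    "\<forall>a b. mat_unit (D l) 1 1 \<noteq> a \<cdot>\<^sub>m mat_unit (D l) 0 0 + b \<cdot>\<^sub>m (mat_unit (D l) 0 1 :: 'a mat)"
    using n by (auto intro!: neq_if_index_neq[where i = 1 and j = 1])
  ultimately show False
    using not_length_le_2_if_triple_in_component[OF k] len by blast
qed

lemma independent_pair_in_component:
  assumes k: "k < r" and E: "e k l \<noteq> 0\<^sub>m (D l) (D l)" and n: "2 \<le> D l"
  obtains Y1 Y2 where "comp_weight_vector k l Y1" "comp_weight_vector k l Y2"
    "Y1 \<noteq> 0\<^sub>m (D l) (D l)" "\<forall>c. Y2 \<noteq> c \<cdot>\<^sub>m Y1"
proof (cases "e k l = 1\<^sub>m (D l)")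
  case True
  have "comp_weight_vector k l (mat_unit (D l) a b)" for a b
    using comp_weight_vector_sandwich[OF k k mat_unit_carrier, of l a b] True by simp
  moreover have "mat_unit (D l) 0 0 \<noteq> (0\<^sub>m (D l) (D l) :: 'a mat)"
    using n by (intro neq_if_index_neq[where i = 0 and j = 0]) simp
  moreover have "\<forall>c. mat_unit (D l) 0 1 \<noteq> c \<cdot>\<^sub>m (mat_unit (D l) 0 0 :: 'a mat)"
    using n by (auto intro!: neq_if_index_neq[where i = 0 and j = 1])
  ultimately show ?thesis using that by blast
next
  case False
  obtain q where q: "q < r" "q \<noteq> k" "e q l \<noteq> 0\<^sub>m (D l) (D l)"
    using exists_other_e_component[OF k False] by blast
  obtain b c where bc: "e q l * mat_unit (D l) b c * e k l \<noteq> 0\<^sub>m (D l) (D l)"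
    using mat_unit_sandwich_nonzero[OF e_carrier[OF q(1)] q(3) e_carrier[OF k] E] by blast
  have "e q l * mat_unit (D l) b c * e k l \<noteq> c' \<cdot>\<^sub>m e k l" for c'
  proof
    assume "e q l * mat_unit (D l) b c * e k l = c' \<cdot>\<^sub>m e k l"
    then show False
      using fixed_vector_eq_0_if_annihilated_multiple[OF e_carrier[OF q(1)] e_carrier[OF k]]
        idem_mult_sandwich[OF e_carrier[OF q(1)] mat_unit_carrier e_carrier[OF k] e_idem[OF q(1)]]
        e_orth[OF q(1) k q(2)] bc by blast
  qed
  then show ?thesis
    using that comp_weight_vector_e[OF k] comp_weight_vector_sandwich[OF k q(1) mat_unit_carrier] E
    by blast
qed

lemma e_component_eq_0_if_dim_ge_2:
  assumes k: "k < r" and len: "length_le d m (Ssub r \<phi>) (M k) 2"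
    and E: "e k l \<noteq> 0\<^sub>m (D l) (D l)" and n: "2 \<le> D l" and l': "l' \<noteq> l"
  shows "e k l' = 0\<^sub>m (D l') (D l')"
proof (rule ccontr)
  assume E': "e k l' \<noteq> 0\<^sub>m (D l') (D l')"
  obtain Y1 Y2 where Y: "comp_weight_vector k l Y1" "comp_weight_vector k l Y2"
    "Y1 \<noteq> 0\<^sub>m (D l) (D l)" "\<forall>c. Y2 \<noteq> c \<cdot>\<^sub>m Y1"
    using independent_pair_in_component[OF k E n] by blast
  have "\<not> length_le d m (Ssub r \<phi>) (M k) 2"
    by (rule not_length_le_2_if_pair_in_component[OF k Y
          single_comp_M[OF k comp_weight_vector_e[OF k, of l']]
          weight_vector_single_comp[OF comp_weight_vector_e[OF k, of l']]])
      (use l' E' in \<open>auto dest!: fun_cong[where x = l'] simp: single_comp_apply tsmult_def tadd_def\<close>)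
  then show False using len by simp
qed

lemma not_three_idempotents_in_component:
  assumes k: "k < r" and len: "length_le d m (Ssub r \<phi>) (M k) 2"
    and E: "e k l \<noteq> 0\<^sub>m (D l) (D l)"
    and q: "q < r" "q \<noteq> k" "e q l \<noteq> 0\<^sub>m (D l) (D l)"
    and q': "q' < r" "q' \<noteq> k" "q' \<noteq> q" "e q' l \<noteq> 0\<^sub>m (D l) (D l)"
  shows False
proof -
  let ?E = "e k l" and ?F = "e q l" and ?G = "e q' l"
  have cE: "?E \<in> carrier_mat (D l) (D l)" and cF: "?F \<in> carrier_mat (D l) (D l)"
    and cG: "?G \<in> carrier_mat (D l) (D l)" using k q q' by simp_all
  obtain b c where Y2: "?F * mat_unit (D l) b c * ?E \<noteq> 0\<^sub>m (D l) (D l)"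
    using mat_unit_sandwich_nonzero[OF cF q(3) cE E] by blast
  obtain b' c' where Y3: "?G * mat_unit (D l) b' c' * ?E \<noteq> 0\<^sub>m (D l) (D l)"
    using mat_unit_sandwich_nonzero[OF cG q'(4) cE E] by blast
  let ?Y2 = "?F * mat_unit (D l) b c * ?E" and ?Y3 = "?G * mat_unit (D l) b' c' * ?E"
  have FY2: "?F * ?Y2 = ?Y2"
    by (rule idem_mult_sandwich[OF cF mat_unit_carrier cE e_idem[OF q(1)]])
  have GY3: "?G * ?Y3 = ?Y3"
    by (rule idem_mult_sandwich[OF cG mat_unit_carrier cE e_idem[OF q'(1)]])
  have GY2: "?G * ?Y2 = 0\<^sub>m (D l) (D l)"
    using orth_mult_sandwich[OF cG cF mat_unit_carrier cE] e_orth q(1) q'(1,3) by simp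
  have "\<forall>c'. ?Y2 \<noteq> c' \<cdot>\<^sub>m ?E"
    using fixed_vector_eq_0_if_annihilated_multiple[OF cF cE FY2] e_orth[OF q(1) k q(2)] Y2 by blast
  moreover have "\<forall>a b. ?Y3 \<noteq> a \<cdot>\<^sub>m ?E + b \<cdot>\<^sub>m ?Y2"
    using fixed_vector_eq_0_if_in_annihilated_span[OF cG cE _ GY3] e_orth[OF q'(1) k q'(2)] GY2 Y3
    by (metis cF cE mat_unit_carrier mult_carrier_mat)
  ultimately show False
    using not_length_le_2_if_triple_in_component[OF k comp_weight_vector_e[OF k]
        comp_weight_vector_sandwich[OF k q(1) mat_unit_carrier]
        comp_weight_vector_sandwich[OF k q'(1) mat_unit_carrier] E] len
    by blast
qed

lemma not_length_le_2_if_not_col_rank_le_1: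
  assumes k: "k < r" and p: "p < r" "p' < r" "p \<noteq> p'"
    and E: "e k l \<noteq> 0\<^sub>m (D l) (D l)" and H: "e p' l \<noteq> 0\<^sub>m (D l) (D l)"
    and G: "\<not> col_rank_le_1 (D l) (e p l)"
  shows "\<not> length_le d m (Ssub r \<phi>) (M k) 2"
proof -
  let ?n = "D l" and ?E = "e k l" and ?G = "e p l" and ?H = "e p' l"
  have cE: "?E \<in> carrier_mat ?n ?n" and cG: "?G \<in> carrier_mat ?n ?n"
    and cH: "?H \<in> carrier_mat ?n ?n" using k p by simp_all
  obtain a c c0 where Y12: "?G * mat_unit ?n c c0 * ?E \<noteq> 0\<^sub>m ?n ?n"
      "\<forall>\<alpha>. ?G * mat_unit ?n a c0 * ?E \<noteq> \<alpha> \<cdot>\<^sub>m (?G * mat_unit ?n c c0 * ?E)"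
    by (rule sandwich_pair_if_not_col_rank_le_1[OF cG cE E G])
  obtain b' c' where Y3: "?H * mat_unit ?n b' c' * ?E \<noteq> 0\<^sub>m ?n ?n"
    using mat_unit_sandwich_nonzero[OF cH H cE E] by blast
  have cY: "?G * mat_unit ?n b c0 * ?E \<in> carrier_mat ?n ?n" for b
    by (rule mult_carrier_mat[OF mult_carrier_mat[OF cG mat_unit_carrier] cE])
  have HY: "?H * (?G * mat_unit ?n b c0 * ?E) = 0\<^sub>m ?n ?n" for b
    using orth_mult_sandwich[OF cH cG mat_unit_carrier cE] e_orth p by simp
  have "\<forall>a' b. ?H * mat_unit ?n b' c' * ?E \<noteq>
      a' \<cdot>\<^sub>m (?G * mat_unit ?n c c0 * ?E) + b \<cdot>\<^sub>m (?G * mat_unit ?n a c0 * ?E)"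
  proof (intro allI notI)
    fix a' b assume "?H * mat_unit ?n b' c' * ?E =
      a' \<cdot>\<^sub>m (?G * mat_unit ?n c c0 * ?E) + b \<cdot>\<^sub>m (?G * mat_unit ?n a c0 * ?E)"
    then have "?H * mat_unit ?n b' c' * ?E = 0\<^sub>m ?n ?n"
      by (rule fixed_vector_eq_0_if_in_annihilated_span[OF cH cY cY
            idem_mult_sandwich[OF cH mat_unit_carrier cE e_idem[OF p(2)]] HY HY])
    then show False using Y3 by contradiction
  qed
  then show ?thesis
    using not_length_le_2_if_triple_in_component[OF k _ _ comp_weight_vector_sandwich[OF k p(2) mat_unit_carrier]]
      comp_weight_vector_sandwich[OF k p(1) mat_unit_carrier] Y12 by blast
qed

lemma dim_le_2:
  assumes k: "k < r" and len: "length_le d m (Ssub r \<phi>) (M k) 2" and E: "e k l \<noteq> 0\<^sub>m (D l) (D l)"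
  shows "D l \<le> 2"
proof (rule ccontr)
  assume "\<not> D l \<le> 2"
  then have n: "3 \<le> D l" by simp
  have "e k l \<noteq> 1\<^sub>m (D l)" using dim_le_1_if_e_component_one[OF k len] n by force
  then obtain q where q: "q < r" "q \<noteq> k" "e q l \<noteq> 0\<^sub>m (D l) (D l)"
    using exists_other_e_component[OF k] by blast
  show False
  proof (cases "\<exists>q'<r. q' \<noteq> k \<and> q' \<noteq> q \<and> e q' l \<noteq> 0\<^sub>m (D l) (D l)")
    case True
    then show False using not_three_idempotents_in_component[OF k len E q] by blast
  next
    case False
    then have "e k l + e q l = 1\<^sub>m (D l)"
      using e_component_sum_eq_one[OF k q(1) q(2)[symmetric]] by blast
    then have "\<not> col_rank_le_1 (D l) (e k l) \<or> \<not> col_rank_le_1 (D l) (e q l)"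
      using one_mat_neq_sum_col_rank_le_1[OF n e_carrier[OF k] e_carrier[OF q(1)]] by blast
    then show False
      using not_length_le_2_if_not_col_rank_le_1[OF k k q(1) q(2)[symmetric] E q(3)]
        not_length_le_2_if_not_col_rank_le_1[OF k q(1) k q(2) E E] len by blast
  qed
qed

lemma at_most_two_components:
  assumes k: "k < r" and len: "length_le d m (Ssub r \<phi>) (M k) 2"
    and l: "l1 \<noteq> l2" "l1 \<noteq> l3" "l2 \<noteq> l3"
    and E: "e k l1 \<noteq> 0\<^sub>m (D l1) (D l1)" "e k l2 \<noteq> 0\<^sub>m (D l2) (D l2)" "e k l3 \<noteq> 0\<^sub>m (D l3) (D l3)"
  shows False
proof -
  have "\<not> length_le d m (Ssub r \<phi>) (M k) 2"
  proof (rule not_length_le_2_if_independent[OF k])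
    show "single_comp l1 (e k l1) \<in> M k" "single_comp l2 (e k l2) \<in> M k" "single_comp l3 (e k l3) \<in> M k"
      using single_comp_M[OF k comp_weight_vector_e[OF k]] by blast+
    show "weight_vector (single_comp l1 (e k l1))" "weight_vector (single_comp l2 (e k l2))"
      "weight_vector (single_comp l3 (e k l3))"
      using weight_vector_single_comp[OF comp_weight_vector_e[OF k]] by blast+
    show "single_comp l1 (e k l1) \<noteq> tzero d m"
      using E(1) by (auto dest!: fun_cong[where x = l1] simp: single_comp_apply tzero_apply)
    show "\<forall>c. single_comp l2 (e k l2) \<noteq> tsmult c (single_comp l1 (e k l1))"
      using E(2) l by (auto dest!: fun_cong[where x = l2] simp: single_comp_apply tsmult_def)
    show "\<forall>a b. single_comp l3 (e k l3) \<noteq>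
        tadd (tsmult a (single_comp l1 (e k l1))) (tsmult b (single_comp l2 (e k l2)))"
      using E(3) l by (auto dest!: fun_cong[where x = l3] simp: single_comp_apply tsmult_def tadd_def)
  qed
  then show False using len by simp
qed

section \<open>The three cases\<close>

lemma Sfac_subset_Scomp:
  assumes k: "k < r" and supp: "\<forall>x. x \<noteq> l \<longrightarrow> e k x = 0\<^sub>m (D x) (D x)"
  shows "Sfac \<phi> k \<subseteq> Scomp d m l"
proof
  fix f assume "f \<in> Sfac \<phi> k"
  then obtain c where f: "f = tsmult c (e k)" unfolding Sfac_eq[OF k] by blast
  then have "f \<in> Stilde d m" using e_Stilde[OF k] by simp
  moreover have "\<forall>x. x \<noteq> l \<longrightarrow> f x = zcomp d m x" using f supp by (simp add: tsmult_def zcomp_eq)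
  ultimately show "f \<in> Scomp d m l" unfolding Scomp_def by blast
qed

lemma Sfac_eq_Scomp:
  assumes k: "k < r" and l: "l < m" "d l = 1" and E: "e k l = 1\<^sub>m 1"
    and supp: "\<forall>x. x \<noteq> l \<longrightarrow> e k x = 0\<^sub>m (D x) (D x)"
  shows "Sfac \<phi> k = Scomp d m l"
proof
  show "Sfac \<phi> k \<subseteq> Scomp d m l" by (rule Sfac_subset_Scomp[OF k supp])
  show "Scomp d m l \<subseteq> Sfac \<phi> k"
  proof
    fix f :: "nat \<Rightarrow> 'a mat" assume "f \<in> Scomp d m l"
    then have f: "f \<in> Stilde d m" "\<forall>x. x \<noteq> l \<longrightarrow> f x = 0\<^sub>m (D x) (D x)"
      unfolding Scomp_def by (auto simp: zcomp_eq)
    have fl: "f l \<in> carrier_mat 1 1" using Stilde_carrier[OF f(1), of l] l by (simp add: comp_dim_def)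
    have "f x = tsmult (f l $$ (0, 0)) (e k) x" for x
    proof (cases "x = l")
      case True
      then show ?thesis using fl E by (auto simp: tsmult_def intro!: eq_matI)
    next
      case False
      then show ?thesis using f(2) supp by (simp add: tsmult_def)
    qed
    then have "f = tsmult (f l $$ (0, 0)) (e k)" by (rule ext)
    then show "f \<in> Sfac \<phi> k" unfolding Sfac_eq[OF k] by blast
  qed
qed

lemma Sfac_eq_diagonal_pair:
  assumes k: "k < r" and E: "e k l = 1\<^sub>m 1" "e k l' = 1\<^sub>m 1"
    and supp: "\<forall>x. x \<noteq> l \<and> x \<noteq> l' \<longrightarrow> e k x = 0\<^sub>m (D x) (D x)"
  shows "Sfac \<phi> k = {(\<lambda>x. if x = l \<or> x = l' then c \<cdot>\<^sub>m 1\<^sub>m 1 else zcomp d m x) | c. True}"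
proof -
  have "tsmult c (e k) = (\<lambda>x. if x = l \<or> x = l' then c \<cdot>\<^sub>m 1\<^sub>m 1 else zcomp d m x)" for c
    using E supp by (auto simp: tsmult_def zcomp_eq)
  then show ?thesis unfolding Sfac_eq[OF k] by simp
qed

lemma Sfac_sum_component:
  assumes "k < r" "q < r"
  shows "{(tadd x y) l | x y. x \<in> Sfac \<phi> k \<and> y \<in> Sfac \<phi> q} = {a \<cdot>\<^sub>m e k l + b \<cdot>\<^sub>m e q l | a b. True}"
proof -
  have "{(tadd x y) l | x y. x \<in> Sfac \<phi> k \<and> y \<in> Sfac \<phi> q} =
      {(tadd (tsmult a (e k)) (tsmult b (e q))) l | a b. True}"
    unfolding Sfac_eq[OF assms(1)] Sfac_eq[OF assms(2)] by blast
  then show ?thesis by (simp add: tadd_def tsmult_def)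
qed

lemma factor_case_dim_2:
  assumes len_all: "\<forall>k<r. length_le d m (Ssub r \<phi>) (M k) 2" and k: "k < r"
    and l: "l < m" "d l = 2" and E: "e k l \<noteq> 0\<^sub>m (D l) (D l)"
  shows "\<exists>q<r. q \<noteq> k \<and> (\<exists>i<m. d i = 2 \<and>
        Sfac \<phi> k \<subseteq> Scomp d m i \<and> Sfac \<phi> q \<subseteq> Scomp d m i \<and>
        (\<exists>\<psi>. mat_alg_iso 2 \<psi> \<and>
           \<psi> ` {(tadd x y) i | x y. x \<in> Sfac \<phi> k \<and> y \<in> Sfac \<phi> q} =
             {A \<in> carrier_mat 2 2. A $$ (0,1) = 0 \<and> A $$ (1,0) = 0}))"
proof -
  have D: "D l = 2" using l by (simp add: comp_dim_def)
  have len: "length_le d m (Ssub r \<phi>) (M k) 2" using len_all k by blast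
  have "e k l \<noteq> 1\<^sub>m (D l)" using dim_le_1_if_e_component_one[OF k len, of l] D by auto
  then obtain q where q: "q < r" "q \<noteq> k" "e q l \<noteq> 0\<^sub>m (D l) (D l)"
    using exists_other_e_component[OF k] by blast
  have len_q: "length_le d m (Ssub r \<phi>) (M q) 2" using len_all q(1) by blast
  have "Sfac \<phi> k \<subseteq> Scomp d m l"
    using Sfac_subset_Scomp[OF k] e_component_eq_0_if_dim_ge_2[OF k len E] D by simp
  moreover have "Sfac \<phi> q \<subseteq> Scomp d m l"
    using Sfac_subset_Scomp[OF q(1)] e_component_eq_0_if_dim_ge_2[OF q(1) len_q q(3)] D by simp
  moreover have cE: "e k l \<in> carrier_mat 2 2" and cF: "e q l \<in> carrier_mat 2 2"
    using e_carrier[OF k, of l] e_carrier[OF q(1), of l] D by simp_all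
  moreover obtain P Q where PQ: "P \<in> carrier_mat 2 2" "Q \<in> carrier_mat 2 2" "Q * P = 1\<^sub>m 2"
      "Q * e k l * P = mat_unit 2 0 0" "Q * e q l * P = mat_unit 2 1 1"
  proof (rule orthogonal_idempotents_2_diagonalizable[OF cE cF])
    show "e k l * e k l = e k l" "e q l * e q l = e q l" using e_idem k q(1) by blast+
    show "e k l * e q l = 0\<^sub>m 2 2" "e q l * e k l = 0\<^sub>m 2 2"
      using e_orth[OF k q(1) q(2)[symmetric]] e_orth[OF q(1) k q(2)] D by simp_all
    show "e k l \<noteq> 0\<^sub>m 2 2" "e q l \<noteq> 0\<^sub>m 2 2" using E q(3) D by simp_all
  qed
  moreover have iso: "mat_alg_iso 2 (\<lambda>A. Q * A * P)" by (rule mat_alg_iso_conj[OF PQ(1-3)])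
  moreover have "(\<lambda>A. Q * A * P) ` {(tadd x y) l | x y. x \<in> Sfac \<phi> k \<and> y \<in> Sfac \<phi> q} =
      {a \<cdot>\<^sub>m mat_unit 2 0 0 + b \<cdot>\<^sub>m mat_unit 2 1 1 | a b. True}"
    using mat_alg_iso_image_lin_span2[OF iso cE cF] PQ(4,5) by (simp add: Sfac_sum_component[OF k q(1)])
  ultimately show ?thesis using q l by (auto simp only: diagonal_mats_2_eq)
qed

lemma factor_case_dim_1:
  assumes len_all: "\<forall>k<r. length_le d m (Ssub r \<phi>) (M k) 2" and k: "k < r"
    and l: "l < m" "d l = 1" and E: "e k l \<noteq> 0\<^sub>m (D l) (D l)"
  shows "(\<exists>i<m. Sfac \<phi> k = Scomp d m i)
   \<or> (\<exists>i<m. \<exists>j<m. i \<noteq> j \<and> d i = 1 \<and> d j = 1 \<and>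
        Sfac \<phi> k = {(\<lambda>l. if l = i \<or> l = j then c \<cdot>\<^sub>m 1\<^sub>m 1 else zcomp d m l) | c. True})"
proof -
  have len: "length_le d m (Ssub r \<phi>) (M k) 2" using len_all k by blast
  have one: "e k x = 1\<^sub>m 1" if "x < m" "d x = 1" "e k x \<noteq> 0\<^sub>m (D x) (D x)" for x
    using idempotent_1_1[of "e k x"] e_carrier[OF k, of x] e_idem[OF k] that
    by (simp add: comp_dim_def)
  show ?thesis
  proof (cases "\<forall>x. x \<noteq> l \<longrightarrow> e k x = 0\<^sub>m (D x) (D x)")
    case True
    then show ?thesis using Sfac_eq_Scomp[OF k l one[OF l E]] l(1) by blast
  next
    case False
    then obtain l' where l': "l' \<noteq> l" "e k l' \<noteq> 0\<^sub>m (D l') (D l')" by blast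
    have l'_pos: "l' < m" "0 < d l'" using comp_dim_pos_if_nonzero[OF e_carrier[OF k] l'(2)] by simp_all
    have "\<not> 2 \<le> D l'" using e_component_eq_0_if_dim_ge_2[OF k len l'(2) _ l'(1)[symmetric]] E by blast
    then have d': "d l' = 1" using l'_pos by (simp add: comp_dim_def)
    have "\<forall>x. x \<noteq> l \<and> x \<noteq> l' \<longrightarrow> e k x = 0\<^sub>m (D x) (D x)"
    proof (intro allI impI)
      fix x assume x: "x \<noteq> l \<and> x \<noteq> l'"
      show "e k x = 0\<^sub>m (D x) (D x)"
        using at_most_two_components[of k l l' x, OF k len l'(1)[symmetric]] x E l'(2) by auto
    qed
    then show ?thesis
      using Sfac_eq_diagonal_pair[OF k one[OF l E] one[OF l'_pos(1) d' l'(2)]] l l'(1) l'_pos(1) d'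
      by blast
  qed
qed

lemma factor_cases:
  assumes len_all: "\<forall>k<r. length_le d m (Ssub r \<phi>) (M k) 2" and k: "k < r"
  shows "(\<exists>i<m. Sfac \<phi> k = Scomp d m i)
   \<or> (\<exists>i<m. \<exists>j<m. i \<noteq> j \<and> d i = 1 \<and> d j = 1 \<and>
        Sfac \<phi> k = {(\<lambda>l. if l = i \<or> l = j then c \<cdot>\<^sub>m 1\<^sub>m 1 else zcomp d m l) | c. True})
   \<or> (\<exists>q<r. q \<noteq> k \<and> (\<exists>i<m. d i = 2 \<and>
        Sfac \<phi> k \<subseteq> Scomp d m i \<and> Sfac \<phi> q \<subseteq> Scomp d m i \<and>
        (\<exists>\<psi>. mat_alg_iso 2 \<psi> \<and>
           \<psi> ` {(tadd x y) i | x y. x \<in> Sfac \<phi> k \<and> y \<in> Sfac \<phi> q} =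
             {A \<in> carrier_mat 2 2. A $$ (0,1) = 0 \<and> A $$ (1,0) = 0})))"
proof -
  have "\<exists>l. e k l \<noteq> 0\<^sub>m (D l) (D l)"
  proof (rule ccontr)
    assume "\<not> (\<exists>l. e k l \<noteq> 0\<^sub>m (D l) (D l))"
    then have "e k = tzero d m" by (intro ext) (simp add: tzero_apply)
    then show False using e_neq_tzero[OF k] by blast
  qed
  then obtain l where E: "e k l \<noteq> 0\<^sub>m (D l) (D l)" by blast
  have l: "l < m" "0 < d l" using comp_dim_pos_if_nonzero[OF e_carrier[OF k] E] by simp_all
  have "d l \<le> 2" using dim_le_2[OF k _ E] len_all k l(1) by (simp add: comp_dim_def)
  then consider "d l = 1" | "d l = 2" using l(2) by linarith
  then show ?thesis
  proof cases
    case 1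
    then show ?thesis using factor_case_dim_1[OF len_all k l(1) _ E] by blast
  next
    case 2
    then show ?thesis using factor_case_dim_2[OF len_all k l(1) _ E] by blast
  qed
qed

end

theorem lemma1p9:
  fixes d :: "nat \<Rightarrow> nat" and m r :: nat
    and \<phi> :: "(nat \<Rightarrow> 'a::alg_closed_field) \<Rightarrow> nat \<Rightarrow> 'a mat"
  assumes d_pos: "\<forall>i<m. 0 < d i"
    and emb: "alg_embedding d m r \<phi>"
    and len: "\<forall>k<r. length_le d m (Ssub r \<phi>) (tens_mod d m \<phi> k) 2"
  shows "\<forall>k<r.
     (\<exists>i<m. Sfac \<phi> k = Scomp d m i)
   \<or> (\<exists>i<m. \<exists>j<m. i \<noteq> j \<and> d i = 1 \<and> d j = 1 \<and>
        Sfac \<phi> k = {(\<lambda>l. if l = i \<or> l = j then c \<cdot>\<^sub>m 1\<^sub>m 1 else zcomp d m l) | c. True})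
   \<or> (\<exists>q<r. q \<noteq> k \<and> (\<exists>i<m. d i = 2 \<and>
        Sfac \<phi> k \<subseteq> Scomp d m i \<and> Sfac \<phi> q \<subseteq> Scomp d m i \<and>
        (\<exists>\<psi>. mat_alg_iso 2 \<psi> \<and>
           \<psi> ` {(tadd x y) i | x y. x \<in> Sfac \<phi> k \<and> y \<in> Sfac \<phi> q} =
             {A \<in> carrier_mat 2 2. A $$ (0,1) = 0 \<and> A $$ (1,0) = 0})))"
proof -
  interpret split_subalgebra d m r \<phi> by (rule split_subalgebra.intro[OF emb])
  show ?thesis using factor_cases[OF len] by blast
qed

end
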